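(* Let $(M,J,c)$ be a conformal almost Hermitian structure of dimension $n\ge4$ and let $\nabla^W$ be a Weyl connection, i.e. a torsion-free affine connection such that for each $g\in c$ there is a 1-form $B$ with $\nabla^W_ag_{bc}=2B_ag_{bc}$. Let $G^W(X,Y):=-\frac12J(\nabla^W_YJ)X$. Then the following are equivalent: (i) $\nabla^W$ is compatible with $J$, i.e. $\nabla^W_aJ^a{}_b=0$; (ii) $G^W$ is totally trace-free; (iii) $JG^W$ is totally trace-free; (iv) $(X,Y)\mapsto G^W(X,JY)$ is totally trace-free; (v) $(X,Y)\mapsto G^W(JX,JY)$ is totally trace-free. Moreover, when these hold, $\nabla^W=\nabla^c$.
   Context: A conformal almost Hermitian structure: $J$ almost complex ($J^2=-\mathrm{id}$), $c$ a conformal class of Riemannian metrics for which $J$ is orthogonal. A $(1,2)$ tensor $H^a{}_{bc}$ is totally trace-free if all contractions vanish: $H^a{}_{ab}=0$, $H^a{}_{ba}=0$, and $g^{bc}H^a{}_{bc}=0$ for $g\in c$. $\nabla^c$ denotes the canonical Weyl connection: for $g\in c$ with Levi-Civita connection $\nabla$, $B_a:=\frac1{n-2}J^c{}_b\nabla_cJ^b{}_a$ and $\nabla^c_aY^b:=\nabla_aY^b-B_aY^b+B^bY_a-B_cY^c\delta^b_a$; this is independent of $g\in c$. *)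

theory Defs
  imports "HOL-Analysis.Analysis"
begin

text \<open>Local model: M is an open set U in real^'n (one coordinate chart); tensor
fields are given by their coordinate components, indexed by the finite type 'n.
Index conventions: J x a b = J^a_b; g x a b = g_ab;
Gam x a b c = Gamma^a_bc with nabla_a Y^b = d_a Y^b + Gamma^b_ac Y^c.\<close>

definition pd :: "(real^'n \<Rightarrow> real) \<Rightarrow> real^'n \<Rightarrow> 'n \<Rightarrow> real" where
  "pd f x i = frechet_derivative f (at x) (axis i 1)"

definition metric_mat :: "(real^'n \<Rightarrow> 'n \<Rightarrow> 'n \<Rightarrow> real) \<Rightarrow> real^'n \<Rightarrow> real^'n^'n" where
  "metric_mat g x = (\<chi> i j. g x i j)"

definition ginv :: "(real^'n \<Rightarrow> 'n \<Rightarrow> 'n \<Rightarrow> real) \<Rightarrow> real^'n \<Rightarrow> 'n \<Rightarrow> 'n \<Rightarrow> real" where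
  "ginv g x a b = matrix_inv (metric_mat g x) $ a $ b"

definition lc_christoffel :: "(real^'n \<Rightarrow> 'n \<Rightarrow> 'n \<Rightarrow> real) \<Rightarrow> real^'n \<Rightarrow> 'n \<Rightarrow> 'n \<Rightarrow> 'n \<Rightarrow> real" where
  "lc_christoffel g x a b c = (1/2) * (\<Sum>d\<in>UNIV. ginv g x a d *
     (pd (\<lambda>y. g y d c) x b + pd (\<lambda>y. g y d b) x c - pd (\<lambda>y. g y b c) x d))"

definition cov_J :: "(real^'n \<Rightarrow> 'n \<Rightarrow> 'n \<Rightarrow> 'n \<Rightarrow> real) \<Rightarrow> (real^'n \<Rightarrow> 'n \<Rightarrow> 'n \<Rightarrow> real)
     \<Rightarrow> real^'n \<Rightarrow> 'n \<Rightarrow> 'n \<Rightarrow> 'n \<Rightarrow> real" where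
  "cov_J Gam J x a b c = pd (\<lambda>y. J y b c) x a + (\<Sum>d\<in>UNIV. Gam x b a d * J x d c)
     - (\<Sum>d\<in>UNIV. Gam x d a c * J x b d)"

definition cov_g :: "(real^'n \<Rightarrow> 'n \<Rightarrow> 'n \<Rightarrow> 'n \<Rightarrow> real) \<Rightarrow> (real^'n \<Rightarrow> 'n \<Rightarrow> 'n \<Rightarrow> real)
     \<Rightarrow> real^'n \<Rightarrow> 'n \<Rightarrow> 'n \<Rightarrow> 'n \<Rightarrow> real" where
  "cov_g Gam g x a b c = pd (\<lambda>y. g y b c) x a - (\<Sum>d\<in>UNIV. Gam x d a b * g x d c)
     - (\<Sum>d\<in>UNIV. Gam x d a c * g x b d)"

definition conformal_almost_hermitian ::
  "(real^'n) set \<Rightarrow> (real^'n \<Rightarrow> 'n \<Rightarrow> 'n \<Rightarrow> real) \<Rightarrow> (real^'n \<Rightarrow> 'n \<Rightarrow> 'n \<Rightarrow> real) \<Rightarrow> bool" where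
  "conformal_almost_hermitian U g J \<longleftrightarrow> open U \<and>
     (\<forall>x\<in>U.
        (\<forall>a b. g x a b = g x b a) \<and>
        (\<forall>v::real^'n. v \<noteq> 0 \<longrightarrow> (\<Sum>a\<in>UNIV. \<Sum>b\<in>UNIV. g x a b * v$a * v$b) > 0) \<and>
        (\<forall>a c. (\<Sum>b\<in>UNIV. J x a b * J x b c) = (if a = c then -1 else 0)) \<and>
        (\<forall>c d. (\<Sum>a\<in>UNIV. \<Sum>b\<in>UNIV. g x a b * J x a c * J x b d) = g x c d) \<and>
        (\<forall>a b. (\<lambda>y. g y a b) differentiable (at x)) \<and>
        (\<forall>a b. (\<lambda>y. J y a b) differentiable (at x)))"

definition weyl_connection ::
  "(real^'n) set \<Rightarrow> (real^'n \<Rightarrow> 'n \<Rightarrow> 'n \<Rightarrow> real) \<Rightarrow> (real^'n \<Rightarrow> 'n \<Rightarrow> 'n \<Rightarrow> 'n \<Rightarrow> real) \<Rightarrow> bool" where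
  "weyl_connection U g Gam \<longleftrightarrow>
     (\<forall>x\<in>U. \<forall>a b c. Gam x a b c = Gam x a c b) \<and>
     (\<exists>B :: real^'n \<Rightarrow> 'n \<Rightarrow> real. \<forall>x\<in>U. \<forall>a b c. cov_g Gam g x a b c = 2 * B x a * g x b c)"

text \<open>G^W(X,Y) = -1/2 J (nabla_Y J) X; G_tensor Gam J x d b c = G^d_bc, G(X,Y)^d = G^d_bc X^b Y^c\<close>
definition G_tensor :: "(real^'n \<Rightarrow> 'n \<Rightarrow> 'n \<Rightarrow> 'n \<Rightarrow> real) \<Rightarrow> (real^'n \<Rightarrow> 'n \<Rightarrow> 'n \<Rightarrow> real)
     \<Rightarrow> real^'n \<Rightarrow> 'n \<Rightarrow> 'n \<Rightarrow> 'n \<Rightarrow> real" where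
  "G_tensor Gam J x d b c = - (1/2) * (\<Sum>e\<in>UNIV. J x d e * cov_J Gam J x c e b)"

definition JG_tensor where
  "JG_tensor Gam J x d b c = (\<Sum>e\<in>UNIV. J x d e * G_tensor Gam J x e b c)"

definition GJ2_tensor where
  "GJ2_tensor Gam J x d b c = (\<Sum>e\<in>UNIV. G_tensor Gam J x d b e * J x e c)"

definition GJJ_tensor where
  "GJJ_tensor Gam J x d b c =
     (\<Sum>e\<in>UNIV. \<Sum>f\<in>UNIV. G_tensor Gam J x d e f * J x e b * J x f c)"

definition totally_trace_free ::
  "(real^'n \<Rightarrow> 'n \<Rightarrow> 'n \<Rightarrow> real) \<Rightarrow> real^'n \<Rightarrow> ('n \<Rightarrow> 'n \<Rightarrow> 'n \<Rightarrow> real) \<Rightarrow> bool" where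
  "totally_trace_free g x H \<longleftrightarrow>
     (\<forall>b. (\<Sum>a\<in>UNIV. H a a b) = 0) \<and>
     (\<forall>b. (\<Sum>a\<in>UNIV. H a b a) = 0) \<and>
     (\<forall>a. (\<Sum>b\<in>UNIV. \<Sum>c\<in>UNIV. ginv g x b c * H a b c) = 0)"

definition canon_B :: "(real^'n \<Rightarrow> 'n \<Rightarrow> 'n \<Rightarrow> real) \<Rightarrow> (real^'n \<Rightarrow> 'n \<Rightarrow> 'n \<Rightarrow> real)
     \<Rightarrow> real^'n \<Rightarrow> 'n \<Rightarrow> real" where
  "canon_B g J x a = (1 / (real CARD('n) - 2)) *
     (\<Sum>c\<in>UNIV. \<Sum>b\<in>UNIV. J x c b * cov_J (lc_christoffel g) J x c b a)"

definition canon_christoffel :: "(real^'n \<Rightarrow> 'n \<Rightarrow> 'n \<Rightarrow> real) \<Rightarrow> (real^'n \<Rightarrow> 'n \<Rightarrow> 'n \<Rightarrow> real)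
     \<Rightarrow> real^'n \<Rightarrow> 'n \<Rightarrow> 'n \<Rightarrow> 'n \<Rightarrow> real" where
  "canon_christoffel g J x b a c =
     lc_christoffel g x b a c
     - canon_B g J x a * (if b = c then 1 else 0)
     + (\<Sum>d\<in>UNIV. ginv g x b d * canon_B g J x d) * g x a c
     - canon_B g J x c * (if b = a then 1 else 0)"

end

theory Submission
  imports Defs
begin

text \<open>Put \<open>T\<^sub>k = \<nabla>\<^sup>W\<^sub>k J\<close>. Differentiating \<open>J\<^sup>2 = -1\<close> shows that every \<open>T\<^sub>k\<close>
  anticommutes with \<open>J\<close>, and since \<open>\<nabla>\<^sup>W\<close> preserves the conformal class, differentiating
  \<open>g(J\<cdot>,\<cdot>) + g(\<cdot>,J\<cdot>) = 0\<close> shows that every \<open>T\<^sub>k\<close> is skew-adjoint for \<open>g\<close>. For such \<open>T\<close>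
  each trace of \<open>G\<^sup>W\<close>, \<open>JG\<^sup>W\<close>, \<open>G\<^sup>W(\<cdot>,J\<cdot>)\<close> and \<open>G\<^sup>W(J\<cdot>,J\<cdot>)\<close> is either zero or,
  up to a factor and a composition with \<open>J\<close> or \<open>g\<^sup>-\<^sup>1\<close>, the divergence
  \<open>\<nabla>\<^sup>W\<^sub>a J\<^sup>a\<^sub>b\<close>; so each trace-freeness condition is equivalent to \<open>J\<close>-compatibility.
  By the Koszul formula \<open>\<nabla>\<^sup>W\<close> is the Levi-Civita connection of \<open>g\<close> corrected by the Weyl
  form \<open>B\<close>, and this correction changes the divergence of \<open>J\<close> by \<open>-(n-2) B\<circ>J\<close>. Hence a
  divergence-free \<open>J\<close> forces \<open>B\<close> to be the canonical form, i.e. \<open>\<nabla>\<^sup>W = \<nabla>\<^sup>c\<close>.\<close>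

lemma sum_kronecker_left [simp]:
  "(\<Sum>e\<in>(UNIV::'n::finite set). (if e = a then 1 else 0) * (f e::real)) = f a"
  "(\<Sum>e\<in>(UNIV::'n::finite set). (if a = e then 1 else 0) * (f e::real)) = f a"
  "(\<Sum>e\<in>(UNIV::'n::finite set). (if e = a then -1 else 0) * (f e::real)) = - f a"
  "(\<Sum>e\<in>(UNIV::'n::finite set). (if a = e then -1 else 0) * (f e::real)) = - f a"
  by (simp_all add: if_distrib[of "\<lambda>t. t * _"] cong: if_cong)

lemma sum_kronecker_right [simp]:
  "(\<Sum>e\<in>(UNIV::'n::finite set). (f e::real) * (if e = a then 1 else 0)) = f a"
  "(\<Sum>e\<in>(UNIV::'n::finite set). (f e::real) * (if a = e then 1 else 0)) = f a"
  "(\<Sum>e\<in>(UNIV::'n::finite set). (f e::real) * (if e = a then -1 else 0)) = - f a"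
  "(\<Sum>e\<in>(UNIV::'n::finite set). (f e::real) * (if a = e then -1 else 0)) = - f a"
  by (simp_all add: if_distrib[of "\<lambda>t. _ * t"] cong: if_cong)

lemma sum_swap_pairs:
  "(\<Sum>b\<in>A. \<Sum>c\<in>B. \<Sum>e\<in>C. \<Sum>f\<in>D. F b c e f) = (\<Sum>e\<in>C. \<Sum>f\<in>D. \<Sum>b\<in>A. \<Sum>c\<in>B. F b c e f)"
proof -
  have "(\<Sum>b\<in>A. \<Sum>c\<in>B. \<Sum>e\<in>C. \<Sum>f\<in>D. F b c e f) = (\<Sum>b\<in>A. \<Sum>e\<in>C. \<Sum>f\<in>D. \<Sum>c\<in>B. F b c e f)"
    by (intro sum.cong refl) (subst sum.swap, intro sum.cong refl sum.swap)
  also have "\<dots> = (\<Sum>e\<in>C. \<Sum>f\<in>D. \<Sum>b\<in>A. \<Sum>c\<in>B. F b c e f)"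
    by (subst sum.swap, intro sum.cong refl sum.swap)
  finally show ?thesis .
qed

lemma sum_reverse3:
  "(\<Sum>b\<in>A. \<Sum>e\<in>B. \<Sum>c\<in>C. F b e c) = (\<Sum>c\<in>C. \<Sum>e\<in>B. \<Sum>b\<in>A. F b e c)"
  by (subst sum.swap, subst (2) sum.swap, subst sum.swap, rule refl)

locale hermitian_algebra =
  fixes g gi J :: "'n::finite \<Rightarrow> 'n \<Rightarrow> real"
  assumes g_sym: "g a b = g b a"
    and ginv_sym: "gi a b = gi b a"
    and ginv_g: "(\<Sum>d\<in>UNIV. gi a d * g d c) = (if a = c then 1 else 0)"
    and g_ginv: "(\<Sum>d\<in>UNIV. g a d * gi d c) = (if a = c then 1 else 0)"
    and J_square: "(\<Sum>b\<in>UNIV. J a b * J b c) = (if a = c then -1 else 0)"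
    and gJ_skew: "(\<Sum>d\<in>UNIV. g b d * J d c) = - (\<Sum>d\<in>UNIV. g c d * J d b)"
begin

text \<open>A family \<open>T k b c\<close> stands for the endomorphisms \<open>(T\<^sub>k)\<^sup>b\<^sub>c\<close>, as \<open>\<nabla>\<^sub>k J\<^sup>b\<^sub>c\<close> does.\<close>

definition anticommutes_J :: "('n \<Rightarrow> 'n \<Rightarrow> 'n \<Rightarrow> real) \<Rightarrow> bool" where
  "anticommutes_J T \<longleftrightarrow> (\<forall>k b c. (\<Sum>e\<in>UNIV. T k b e * J e c) + (\<Sum>e\<in>UNIV. J b e * T k e c) = 0)"

definition skew_adjoint :: "('n \<Rightarrow> 'n \<Rightarrow> 'n \<Rightarrow> real) \<Rightarrow> bool" where
  "skew_adjoint T \<longleftrightarrow> (\<forall>k b c. (\<Sum>d\<in>UNIV. g b d * T k d c) + (\<Sum>d\<in>UNIV. g c d * T k d b) = 0)"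

definition divergence :: "('n \<Rightarrow> 'n \<Rightarrow> 'n \<Rightarrow> real) \<Rightarrow> 'n \<Rightarrow> real" where
  "divergence T e = (\<Sum>a\<in>UNIV. T a a e)"

definition trace_free :: "('n \<Rightarrow> 'n \<Rightarrow> 'n \<Rightarrow> real) \<Rightarrow> bool" where
  "trace_free H \<longleftrightarrow> (\<forall>b. (\<Sum>a\<in>UNIV. H a a b) = 0) \<and> (\<forall>b. (\<Sum>a\<in>UNIV. H a b a) = 0) \<and>
     (\<forall>a. (\<Sum>b\<in>UNIV. \<Sum>c\<in>UNIV. gi b c * H a b c) = 0)"

definition G_of :: "('n \<Rightarrow> 'n \<Rightarrow> 'n \<Rightarrow> real) \<Rightarrow> 'n \<Rightarrow> 'n \<Rightarrow> 'n \<Rightarrow> real" where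
  "G_of T d b c = - (1/2) * (\<Sum>e\<in>UNIV. J d e * T c e b)"

definition JG_of :: "('n \<Rightarrow> 'n \<Rightarrow> 'n \<Rightarrow> real) \<Rightarrow> 'n \<Rightarrow> 'n \<Rightarrow> 'n \<Rightarrow> real" where
  "JG_of T d b c = (\<Sum>e\<in>UNIV. J d e * G_of T e b c)"

definition GJ_of :: "('n \<Rightarrow> 'n \<Rightarrow> 'n \<Rightarrow> real) \<Rightarrow> 'n \<Rightarrow> 'n \<Rightarrow> 'n \<Rightarrow> real" where
  "GJ_of T d b c = (\<Sum>e\<in>UNIV. G_of T d b e * J e c)"

definition GJJ_of :: "('n \<Rightarrow> 'n \<Rightarrow> 'n \<Rightarrow> real) \<Rightarrow> 'n \<Rightarrow> 'n \<Rightarrow> 'n \<Rightarrow> real" where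
  "GJJ_of T d b c = (\<Sum>e\<in>UNIV. \<Sum>f\<in>UNIV. G_of T d e f * J e b * J f c)"

lemma anticommutes_JD:
  "anticommutes_J T \<Longrightarrow> (\<Sum>e\<in>UNIV. T k b e * J e c) = - (\<Sum>e\<in>UNIV. J b e * T k e c)"
  by (simp add: anticommutes_J_def eq_neg_iff_add_eq_0)

lemma skew_adjointD:
  "skew_adjoint T \<Longrightarrow> (\<Sum>d\<in>UNIV. g b d * T k d c) = - (\<Sum>d\<in>UNIV. g c d * T k d b)"
  by (simp add: skew_adjoint_def eq_neg_iff_add_eq_0)

lemma ginv_g_contract: "(\<Sum>b\<in>UNIV. gi b c * (\<Sum>d\<in>UNIV. g b d * X d)) = X c"
proof -
  have "(\<Sum>b\<in>UNIV. gi b c * (\<Sum>d\<in>UNIV. g b d * X d)) = (\<Sum>d\<in>UNIV. (\<Sum>b\<in>UNIV. gi c b * g b d) * X d)"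
    unfolding sum_distrib_left sum_distrib_right by (subst sum.swap) (simp add: mult_ac ginv_sym)
  also have "\<dots> = X c" by (simp only: ginv_g) simp
  finally show ?thesis .
qed

lemma ginv_g_contract': "(\<Sum>b\<in>UNIV. gi c b * (\<Sum>d\<in>UNIV. g b d * X d)) = X c"
  using ginv_g_contract[of c X] ginv_sym[of c] by simp

lemma g_ginv_contract: "(\<Sum>a\<in>UNIV. (\<Sum>e\<in>UNIV. gi a e * X e) * g a d) = X d"
proof -
  have "(\<Sum>a\<in>UNIV. (\<Sum>e\<in>UNIV. gi a e * X e) * g a d) = (\<Sum>e\<in>UNIV. (\<Sum>a\<in>UNIV. g d a * gi a e) * X e)"
    unfolding sum_distrib_right by (subst sum.swap) (simp add: mult_ac g_sym)
  also have "\<dots> = X d" by (simp only: g_ginv) simp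
  finally show ?thesis .
qed

lemma J_J_contract: "(\<Sum>e\<in>UNIV. J d e * (\<Sum>f\<in>UNIV. J e f * X f)) = - X d"
proof -
  have "(\<Sum>e\<in>UNIV. J d e * (\<Sum>f\<in>UNIV. J e f * X f)) = (\<Sum>f\<in>UNIV. (\<Sum>e\<in>UNIV. J d e * J e f) * X f)"
    unfolding sum_distrib_left sum_distrib_right by (subst sum.swap) (simp add: mult_ac)
  also have "\<dots> = - X d" by (simp only: J_square) simp
  finally show ?thesis .
qed

lemma contract_J_J: "(\<Sum>b\<in>UNIV. (\<Sum>e\<in>UNIV. X e * J e b) * J b c) = - X c"
proof -
  have "(\<Sum>b\<in>UNIV. (\<Sum>e\<in>UNIV. X e * J e b) * J b c) = (\<Sum>e\<in>UNIV. X e * (\<Sum>b\<in>UNIV. J e b * J b c))"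
    unfolding sum_distrib_left sum_distrib_right by (subst sum.swap) (simp add: mult_ac)
  also have "\<dots> = - X c" by (simp only: J_square) simp
  finally show ?thesis .
qed

lemma zero_if_contract_J_zero:
  assumes "\<And>b. (\<Sum>e\<in>UNIV. X e * J e b) = 0" shows "X c = 0"
  using contract_J_J[of X c] assms by simp

lemma J_raise_lower: "J e c = (\<Sum>d\<in>UNIV. gi e d * (\<Sum>f\<in>UNIV. g d f * J f c))"
  using ginv_g_contract'[of e "\<lambda>f. J f c"] by simp

lemma J_ginv_skew: "(\<Sum>c\<in>UNIV. J e c * gi c b) = - (\<Sum>c\<in>UNIV. J b c * gi c e)"
proof -
  have "(\<Sum>c\<in>UNIV. J e c * gi c b) = (\<Sum>c\<in>UNIV. (\<Sum>d\<in>UNIV. gi e d * (\<Sum>f\<in>UNIV. g d f * J f c)) * gi c b)"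
    by (subst J_raise_lower) (rule refl)
  also have "\<dots> = (\<Sum>c\<in>UNIV. (\<Sum>d\<in>UNIV. gi e d * - (\<Sum>f\<in>UNIV. g c f * J f d)) * gi c b)"
    by (subst gJ_skew) (rule refl)
  also have "\<dots> = - (\<Sum>c\<in>UNIV. (\<Sum>d\<in>UNIV. gi e d * (\<Sum>f\<in>UNIV. g c f * J f d)) * gi c b)"
    by (simp add: sum_negf)
  also have "\<dots> = - (\<Sum>d\<in>UNIV. gi e d * (\<Sum>c\<in>UNIV. gi b c * (\<Sum>f\<in>UNIV. g c f * J f d)))"
    unfolding sum_distrib_left sum_distrib_right
    by (subst sum.swap) (simp add: mult_ac ginv_sym)
  also have "\<dots> = - (\<Sum>d\<in>UNIV. gi e d * J b d)"
    by (simp only: ginv_g_contract')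
  finally show ?thesis by (simp add: ginv_sym mult.commute)
qed

lemma trace_J_zero: "(\<Sum>a\<in>UNIV. J a a) = 0"
proof -
  have "(\<Sum>a\<in>UNIV. J a a) = (\<Sum>a\<in>UNIV. \<Sum>d\<in>UNIV. gi a d * (\<Sum>f\<in>UNIV. g d f * J f a))"
    by (subst J_raise_lower) (rule refl)
  also have "\<dots> = (\<Sum>a\<in>UNIV. \<Sum>d\<in>UNIV. gi a d * - (\<Sum>f\<in>UNIV. g a f * J f d))"
    by (subst gJ_skew) (rule refl)
  also have "\<dots> = - (\<Sum>d\<in>UNIV. \<Sum>a\<in>UNIV. gi d a * (\<Sum>f\<in>UNIV. g a f * J f d))"
    by (subst sum.swap) (simp add: ginv_sym sum_negf)
  also have "\<dots> = - (\<Sum>a\<in>UNIV. J a a)"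
    by (subst J_raise_lower) (rule refl)
  finally show ?thesis by simp
qed

lemma trace_J_comp_zero:
  assumes "anticommutes_J T" shows "(\<Sum>a\<in>UNIV. \<Sum>e\<in>UNIV. J a e * T k e a) = 0"
proof -
  have "(\<Sum>a\<in>UNIV. (\<Sum>e\<in>UNIV. T k a e * J e a) + (\<Sum>e\<in>UNIV. J a e * T k e a)) = 0"
    using assms unfolding anticommutes_J_def by simp
  moreover have "(\<Sum>a\<in>UNIV. \<Sum>e\<in>UNIV. T k a e * J e a) = (\<Sum>a\<in>UNIV. \<Sum>e\<in>UNIV. J a e * T k e a)"
    by (subst sum.swap) (simp add: mult.commute)
  ultimately show ?thesis by (simp add: sum.distrib)
qed

lemma contract_J_eq_divergence:
  assumes "anticommutes_J T"
  shows "(\<Sum>a\<in>UNIV. \<Sum>e\<in>UNIV. J a e * T a e b) = - (\<Sum>e\<in>UNIV. divergence T e * J e b)"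
proof -
  have "(\<Sum>a\<in>UNIV. (\<Sum>e\<in>UNIV. T a a e * J e b) + (\<Sum>e\<in>UNIV. J a e * T a e b)) = 0"
    using assms unfolding anticommutes_J_def by simp
  moreover have "(\<Sum>a\<in>UNIV. \<Sum>e\<in>UNIV. T a a e * J e b) = (\<Sum>e\<in>UNIV. divergence T e * J e b)"
    unfolding divergence_def sum_distrib_right by (rule sum.swap)
  ultimately show ?thesis by (simp add: sum.distrib eq_neg_iff_add_eq_0 add.commute)
qed

lemma trace_zero_if_skew_adjoint:
  assumes "skew_adjoint T" shows "(\<Sum>a\<in>UNIV. T k a a) = 0"
proof -
  have "(\<Sum>b\<in>UNIV. \<Sum>c\<in>UNIV. gi c b * (\<Sum>d\<in>UNIV. g b d * T k d c)) = (\<Sum>a\<in>UNIV. T k a a)"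
    by (subst sum.swap) (simp only: ginv_g_contract')
  moreover have "(\<Sum>b\<in>UNIV. \<Sum>c\<in>UNIV. gi c b * (\<Sum>d\<in>UNIV. g c d * T k d b)) = (\<Sum>a\<in>UNIV. T k a a)"
    by (simp only: ginv_g_contract)
  moreover have "(\<Sum>b\<in>UNIV. \<Sum>c\<in>UNIV. gi c b * ((\<Sum>d\<in>UNIV. g b d * T k d c) + (\<Sum>d\<in>UNIV. g c d * T k d b))) = 0"
    using assms unfolding skew_adjoint_def by simp
  ultimately show ?thesis by (simp add: distrib_left sum.distrib)
qed

lemma metric_trace_eq_divergence:
  assumes "skew_adjoint T"
  shows "(\<Sum>b\<in>UNIV. \<Sum>c\<in>UNIV. gi b c * T c a b) = - (\<Sum>f\<in>UNIV. gi a f * divergence T f)"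
proof -
  have lower: "T c a b = - (\<Sum>f\<in>UNIV. gi a f * (\<Sum>d\<in>UNIV. g b d * T c d f))" for c a b
  proof -
    have "T c a b = (\<Sum>f\<in>UNIV. gi a f * (\<Sum>d\<in>UNIV. g f d * T c d b))"
      using ginv_g_contract'[of a "\<lambda>d. T c d b"] by simp
    also have "\<dots> = (\<Sum>f\<in>UNIV. gi a f * (- (\<Sum>d\<in>UNIV. g b d * T c d f)))"
      by (subst skew_adjointD[OF assms]) (rule refl)
    finally show ?thesis by (simp add: sum_negf)
  qed
  have "(\<Sum>b\<in>UNIV. \<Sum>c\<in>UNIV. gi b c * T c a b)
      = - (\<Sum>c\<in>UNIV. \<Sum>b\<in>UNIV. gi b c * (\<Sum>d\<in>UNIV. g b d * (\<Sum>f\<in>UNIV. gi a f * T c d f)))"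
  proof -
    have "(\<Sum>f\<in>UNIV. gi a f * (\<Sum>d\<in>UNIV. g b d * T c d f)) = (\<Sum>d\<in>UNIV. g b d * (\<Sum>f\<in>UNIV. gi a f * T c d f))"
      for b c unfolding sum_distrib_left by (subst sum.swap) (simp add: mult_ac)
    then show ?thesis by (subst lower) (subst sum.swap, simp add: sum_negf)
  qed
  also have "\<dots> = - (\<Sum>c\<in>UNIV. \<Sum>f\<in>UNIV. gi a f * T c c f)"
    by (simp only: ginv_g_contract)
  also have "\<dots> = - (\<Sum>f\<in>UNIV. gi a f * divergence T f)"
    unfolding divergence_def sum_distrib_left by (subst sum.swap) (rule refl)
  finally show ?thesis .
qed

lemma J_T_J_eq:
  assumes "anticommutes_J T" shows "(\<Sum>e\<in>UNIV. (\<Sum>h\<in>UNIV. J d h * T f h e) * J e b) = T f d b"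
proof -
  have "(\<Sum>e\<in>UNIV. (\<Sum>h\<in>UNIV. J d h * T f h e) * J e b) = (\<Sum>h\<in>UNIV. J d h * (\<Sum>e\<in>UNIV. T f h e * J e b))"
    unfolding sum_distrib_left sum_distrib_right by (subst sum.swap) (simp add: mult_ac)
  also have "\<dots> = (\<Sum>h\<in>UNIV. J d h * - (\<Sum>e\<in>UNIV. J h e * T f e b))"
    by (simp only: anticommutes_JD[OF assms])
  also have "\<dots> = T f d b" using J_J_contract[of d "\<lambda>e. T f e b"] by (simp add: sum_negf)
  finally show ?thesis .
qed

lemma J_ginv_J: "(\<Sum>b\<in>UNIV. \<Sum>c\<in>UNIV. J f b * gi b c * J e c) = gi f e"
proof -
  have "(\<Sum>b\<in>UNIV. \<Sum>c\<in>UNIV. J f b * gi b c * J e c) = (\<Sum>c\<in>UNIV. (\<Sum>b\<in>UNIV. J f b * gi b c) * J e c)"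
    unfolding sum_distrib_right by (rule sum.swap)
  also have "\<dots> = (\<Sum>c\<in>UNIV. (- (\<Sum>b\<in>UNIV. J c b * gi b f)) * J e c)"
    by (simp only: J_ginv_skew[of f])
  also have "\<dots> = - (\<Sum>b\<in>UNIV. (\<Sum>c\<in>UNIV. J e c * J c b) * gi b f)"
    unfolding sum_distrib_right sum_negf by (subst sum.swap) (simp add: mult_ac sum_negf sum_distrib_left)
  also have "\<dots> = gi e f" by (simp only: J_square) simp
  finally show ?thesis by (simp add: ginv_sym)
qed

lemma G_of_comp_J:
  assumes "anticommutes_J T" shows "(\<Sum>b\<in>UNIV. G_of T a b e * J b c) = - (1/2) * T e a c"
proof -
  have "(\<Sum>b\<in>UNIV. G_of T a b e * J b c) = - (1/2) * (\<Sum>b\<in>UNIV. (\<Sum>h\<in>UNIV. J a h * T e h b) * J b c)"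
    unfolding G_of_def by (simp only: mult.assoc sum_distrib_left[symmetric])
  also have "\<dots> = - (1/2) * T e a c" by (simp only: J_T_J_eq[OF assms])
  finally show ?thesis .
qed

lemma JG_of_eq: "JG_of T d b c = (1/2) * T c d b"
proof -
  have "JG_of T d b c = - (1/2) * (\<Sum>e\<in>UNIV. J d e * (\<Sum>f\<in>UNIV. J e f * T c f b))"
    unfolding JG_of_def G_of_def sum_distrib_left by (simp add: mult_ac)
  also have "\<dots> = (1/2) * T c d b" using J_J_contract[of d "\<lambda>f. T c f b"] by simp
  finally show ?thesis .
qed

lemma GJJ_of_eq:
  assumes "anticommutes_J T" shows "GJJ_of T d b c = - (1/2) * (\<Sum>f\<in>UNIV. T f d b * J f c)"
proof -
  have "GJJ_of T d b c = (\<Sum>f\<in>UNIV. (\<Sum>e\<in>UNIV. G_of T d e f * J e b) * J f c)"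
    unfolding GJJ_of_def sum_distrib_right by (rule sum.swap)
  also have "\<dots> = (\<Sum>f\<in>UNIV. (- (1/2) * T f d b) * J f c)"
    by (simp only: G_of_comp_J[OF assms])
  finally show ?thesis by (simp add: sum_distrib_left mult_ac)
qed

lemma trace_G_of_first: 
  assumes "anticommutes_J T" shows "(\<Sum>a\<in>UNIV. G_of T a a b) = 0"
  using trace_J_comp_zero[OF assms, of b] unfolding G_of_def
  by (simp add: sum_negf sum_divide_distrib[symmetric])

lemma trace_G_of_second:
  assumes "anticommutes_J T" shows "(\<Sum>a\<in>UNIV. G_of T a b a) = (1/2) * (\<Sum>e\<in>UNIV. divergence T e * J e b)"
  using contract_J_eq_divergence[OF assms, of b] unfolding G_of_def
  by (simp add: sum_negf sum_divide_distrib[symmetric])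

lemma metric_trace_G_of:
  assumes "skew_adjoint T"
  shows "(\<Sum>b\<in>UNIV. \<Sum>c\<in>UNIV. gi b c * G_of T a b c) = (1/2) * (\<Sum>e\<in>UNIV. J a e * (\<Sum>f\<in>UNIV. gi e f * divergence T f))"
proof -
  have "(\<Sum>b\<in>UNIV. \<Sum>c\<in>UNIV. gi b c * G_of T a b c) = - (1/2) * (\<Sum>e\<in>UNIV. J a e * (\<Sum>b\<in>UNIV. \<Sum>c\<in>UNIV. gi b c * T c e b))"
    unfolding G_of_def sum_distrib_left
    by (subst (2) sum.swap, subst sum.swap) (simp add: mult_ac sum_distrib_left)
  also have "\<dots> = (1/2) * (\<Sum>e\<in>UNIV. J a e * (\<Sum>f\<in>UNIV. gi e f * divergence T f))"
    by (simp add: metric_trace_eq_divergence[OF assms] sum_negf)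
  finally show ?thesis .
qed

lemma trace_free_iff_divergence_zero:
  assumes "\<And>b. (\<Sum>a\<in>UNIV. H a a b) = 0"
    and "(\<forall>b. (\<Sum>a\<in>UNIV. H a b a) = 0) \<longleftrightarrow> (\<forall>b. divergence T b = 0)"
    and "\<And>a. (\<forall>b. divergence T b = 0) \<Longrightarrow> (\<Sum>b\<in>UNIV. \<Sum>c\<in>UNIV. gi b c * H a b c) = 0"
  shows "trace_free H \<longleftrightarrow> (\<forall>b. divergence T b = 0)"
  using assms unfolding trace_free_def by blast

lemma divergence_comp_J_zero_iff:
  "(\<forall>b. (\<Sum>e\<in>UNIV. divergence T e * J e b) = 0) \<longleftrightarrow> (\<forall>b. divergence T b = 0)"
  using zero_if_contract_J_zero[of "divergence T"] by auto

lemma trace_free_G_of_iff: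
  assumes "anticommutes_J T" "skew_adjoint T"
  shows "trace_free (G_of T) \<longleftrightarrow> (\<forall>b. divergence T b = 0)"
  by (rule trace_free_iff_divergence_zero)
    (simp_all add: trace_G_of_first[OF assms(1)] trace_G_of_second[OF assms(1)]
      metric_trace_G_of[OF assms(2)] divergence_comp_J_zero_iff)

lemma trace_free_JG_of_iff:
  assumes "skew_adjoint T"
  shows "trace_free (JG_of T) \<longleftrightarrow> (\<forall>b. divergence T b = 0)"
proof (rule trace_free_iff_divergence_zero)
  show "(\<Sum>a\<in>UNIV. JG_of T a a b) = 0" for b
    using trace_zero_if_skew_adjoint[OF assms, of b] unfolding JG_of_eq
    by (simp add: sum_divide_distrib[symmetric])
  show "(\<forall>b. (\<Sum>a\<in>UNIV. JG_of T a b a) = 0) \<longleftrightarrow> (\<forall>b. divergence T b = 0)"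
    unfolding JG_of_eq divergence_def by (simp add: sum_divide_distrib[symmetric])
  show "(\<Sum>b\<in>UNIV. \<Sum>c\<in>UNIV. gi b c * JG_of T a b c) = 0" if "\<forall>b. divergence T b = 0" for a
    using metric_trace_eq_divergence[OF assms, of a] that unfolding JG_of_eq
    by (simp add: sum_divide_distrib[symmetric] sum_distrib_left[symmetric] mult_ac)
qed

lemma trace_free_GJ_of_iff:
  assumes "anticommutes_J T" "skew_adjoint T"
  shows "trace_free (GJ_of T) \<longleftrightarrow> (\<forall>b. divergence T b = 0)"
proof (rule trace_free_iff_divergence_zero)
  show "(\<Sum>a\<in>UNIV. GJ_of T a a b) = 0" for b
  proof -
    have "(\<Sum>a\<in>UNIV. GJ_of T a a b) = (\<Sum>e\<in>UNIV. (\<Sum>a\<in>UNIV. G_of T a a e) * J e b)"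
      unfolding GJ_of_def sum_distrib_right by (rule sum.swap)
    then show ?thesis using trace_G_of_first[OF assms(1)] by simp
  qed
  have "(\<Sum>a\<in>UNIV. GJ_of T a b a) = (\<Sum>e\<in>UNIV. JG_of T e b e)" for b
    unfolding GJ_of_def JG_of_def by (subst sum.swap) (simp add: mult_ac)
  then show "(\<forall>b. (\<Sum>a\<in>UNIV. GJ_of T a b a) = 0) \<longleftrightarrow> (\<forall>b. divergence T b = 0)"
    unfolding JG_of_eq divergence_def by (simp only:) (simp add: sum_divide_distrib[symmetric])
  show "(\<Sum>b\<in>UNIV. \<Sum>c\<in>UNIV. gi b c * GJ_of T a b c) = 0" if "\<forall>b. divergence T b = 0" for a
  proof -
    have "(\<Sum>b\<in>UNIV. \<Sum>c\<in>UNIV. gi b c * GJ_of T a b c)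
        = (\<Sum>b\<in>UNIV. \<Sum>e\<in>UNIV. G_of T a b e * (\<Sum>c\<in>UNIV. J e c * gi c b))"
      unfolding GJ_of_def sum_distrib_left
      by (rule sum.cong[OF refl], subst sum.swap) (simp add: mult_ac ginv_sym)
    also have "\<dots> = - (\<Sum>b\<in>UNIV. \<Sum>e\<in>UNIV. G_of T a b e * (\<Sum>c\<in>UNIV. J b c * gi c e))"
      by (rule trans[OF sum.cong[OF refl, OF sum.cong[OF refl]]], subst J_ginv_skew, rule refl)
        (simp add: sum_negf)
    also have "\<dots> = - (\<Sum>c\<in>UNIV. \<Sum>e\<in>UNIV. (\<Sum>b\<in>UNIV. G_of T a b e * J b c) * gi c e)"
      unfolding sum_distrib_left sum_distrib_right
      by (subst sum_reverse3) (simp add: mult_ac)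
    also have "\<dots> = (1/2) * (\<Sum>c\<in>UNIV. \<Sum>e\<in>UNIV. gi c e * T e a c)"
      by (simp only: G_of_comp_J[OF assms(1)]) (simp add: sum_distrib_left sum_negf mult_ac)
    also have "\<dots> = 0"
      using metric_trace_eq_divergence[OF assms(2), of a] that by simp
    finally show ?thesis .
  qed
qed

lemma trace_free_GJJ_of_iff:
  assumes "anticommutes_J T" "skew_adjoint T"
  shows "trace_free (GJJ_of T) \<longleftrightarrow> (\<forall>b. divergence T b = 0)"
proof (rule trace_free_iff_divergence_zero)
  show "(\<Sum>a\<in>UNIV. GJJ_of T a a b) = 0" for b
  proof -
    have "(\<Sum>a\<in>UNIV. GJJ_of T a a b) = - (1/2) * (\<Sum>f\<in>UNIV. (\<Sum>a\<in>UNIV. T f a a) * J f b)"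
      unfolding GJJ_of_eq[OF assms(1)] sum_distrib_left[symmetric] sum_distrib_right
      by (subst sum.swap) (rule refl)
    then show ?thesis using trace_zero_if_skew_adjoint[OF assms(2)] by simp
  qed
  have "(\<Sum>a\<in>UNIV. GJJ_of T a b a) = (1/2) * (\<Sum>e\<in>UNIV. divergence T e * J e b)" for b
  proof -
    have "(\<Sum>a\<in>UNIV. GJJ_of T a b a) = - (1/2) * (\<Sum>f\<in>UNIV. \<Sum>a\<in>UNIV. J f a * T f a b)"
      unfolding GJJ_of_eq[OF assms(1)] sum_distrib_left[symmetric]
      by (subst sum.swap) (simp add: mult_ac)
    then show ?thesis using contract_J_eq_divergence[OF assms(1), of b] by simp
  qed
  then show "(\<forall>b. (\<Sum>a\<in>UNIV. GJJ_of T a b a) = 0) \<longleftrightarrow> (\<forall>b. divergence T b = 0)"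
    by (simp only:) (simp add: divergence_comp_J_zero_iff)
  show "(\<Sum>b\<in>UNIV. \<Sum>c\<in>UNIV. gi b c * GJJ_of T a b c) = 0" if "\<forall>b. divergence T b = 0" for a
  proof -
    have "(\<Sum>b\<in>UNIV. \<Sum>c\<in>UNIV. gi b c * GJJ_of T a b c)
        = (\<Sum>e\<in>UNIV. \<Sum>f\<in>UNIV. G_of T a e f * (\<Sum>b\<in>UNIV. \<Sum>c\<in>UNIV. J e b * gi b c * J f c))"
      unfolding GJJ_of_def sum_distrib_left
      by (rule trans[OF sum_swap_pairs]) (simp add: mult_ac)
    also have "\<dots> = (\<Sum>e\<in>UNIV. \<Sum>f\<in>UNIV. gi e f * G_of T a e f)"
      by (simp only: J_ginv_J) (simp add: mult.commute)
    also have "\<dots> = 0"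
      using metric_trace_G_of[OF assms(2), of a] that by simp
    finally show ?thesis .
  qed
qed

text \<open>\<open>D b c k\<close> and \<open>Dg b c k\<close> stand for the partial derivatives \<open>\<partial>\<^sub>k J\<^sup>b\<^sub>c\<close> and \<open>\<partial>\<^sub>k g\<^sub>b\<^sub>c\<close>
  at the point, and \<open>\<Gamma> a b c\<close> for \<open>\<Gamma>\<^sup>a\<^sub>b\<^sub>c\<close>.\<close>

definition nabla_J :: "('n \<Rightarrow> 'n \<Rightarrow> 'n \<Rightarrow> real) \<Rightarrow> ('n \<Rightarrow> 'n \<Rightarrow> 'n \<Rightarrow> real) \<Rightarrow> 'n \<Rightarrow> 'n \<Rightarrow> 'n \<Rightarrow> real" where
  "nabla_J D \<Gamma> k b c = D b c k + (\<Sum>d\<in>UNIV. \<Gamma> b k d * J d c) - (\<Sum>d\<in>UNIV. \<Gamma> d k c * J b d)"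

definition nabla_g :: "('n \<Rightarrow> 'n \<Rightarrow> 'n \<Rightarrow> real) \<Rightarrow> ('n \<Rightarrow> 'n \<Rightarrow> 'n \<Rightarrow> real) \<Rightarrow> 'n \<Rightarrow> 'n \<Rightarrow> 'n \<Rightarrow> real" where
  "nabla_g Dg \<Gamma> k b c = Dg b c k - (\<Sum>d\<in>UNIV. \<Gamma> d k b * g d c) - (\<Sum>d\<in>UNIV. \<Gamma> d k c * g b d)"

definition omega :: "'n \<Rightarrow> 'n \<Rightarrow> real" where
  "omega b c = (\<Sum>d\<in>UNIV. g b d * J d c)"

text \<open>The difference \<open>\<Gamma>\<^sup>W - \<Gamma>\<^sup>L\<^sup>C\<close> for a Weyl connection with form \<open>B\<close>; \<open>canon_christoffel\<close> is the case \<open>B = canon_B\<close>.\<close>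

definition weyl_shift :: "('n \<Rightarrow> real) \<Rightarrow> 'n \<Rightarrow> 'n \<Rightarrow> 'n \<Rightarrow> real" where
  "weyl_shift B e b c = - B b * (if e = c then 1 else 0) - B c * (if e = b then 1 else 0)
     + (\<Sum>d\<in>UNIV. gi e d * B d) * g b c"

lemma omega_skew: "omega b c + omega c b = 0"
  unfolding omega_def using gJ_skew[of b c] by simp

lemma anticommutes_J_nabla_J:
  assumes "\<And>k b c. (\<Sum>e\<in>UNIV. J b e * D e c k + D b e k * J e c) = 0"
  shows "anticommutes_J (nabla_J D \<Gamma>)"
  unfolding anticommutes_J_def
proof (intro allI)
  fix k b c
  have swap: "(\<Sum>e\<in>UNIV. (\<Sum>d\<in>UNIV. \<Gamma> d k e * J b d) * J e c) = (\<Sum>e\<in>UNIV. J b e * (\<Sum>d\<in>UNIV. \<Gamma> e k d * J d c))"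
    unfolding sum_distrib_left sum_distrib_right by (subst sum.swap) (simp add: mult_ac)
  have "(\<Sum>e\<in>UNIV. nabla_J D \<Gamma> k b e * J e c) + (\<Sum>e\<in>UNIV. J b e * nabla_J D \<Gamma> k e c)
      = (\<Sum>e\<in>UNIV. J b e * D e c k + D b e k * J e c)
        + (\<Sum>e\<in>UNIV. (\<Sum>d\<in>UNIV. \<Gamma> b k d * J d e) * J e c)
        - (\<Sum>e\<in>UNIV. (\<Sum>d\<in>UNIV. \<Gamma> d k e * J b d) * J e c)
        + (\<Sum>e\<in>UNIV. J b e * (\<Sum>d\<in>UNIV. \<Gamma> e k d * J d c))
        - (\<Sum>e\<in>UNIV. J b e * (\<Sum>f\<in>UNIV. J e f * \<Gamma> f k c))"
    unfolding nabla_J_def by (simp add: algebra_simps sum.distrib sum_subtractf)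
  also have "\<dots> = 0"
    using assms[of b c k] swap contract_J_J[of "\<Gamma> b k" c] J_J_contract[of b "\<lambda>f. \<Gamma> f k c"] by simp
  finally show "(\<Sum>e\<in>UNIV. nabla_J D \<Gamma> k b e * J e c) + (\<Sum>e\<in>UNIV. J b e * nabla_J D \<Gamma> k e c) = 0" .
qed

lemma derivative_omega:
  assumes weyl: "\<And>b c. nabla_g Dg \<Gamma> k b c = 2 * Bk * g b c"
  shows "(\<Sum>d\<in>UNIV. Dg b d k * J d c + g b d * D d c k) =
      2 * Bk * omega b c + (\<Sum>e\<in>UNIV. \<Gamma> e k b * omega e c) + (\<Sum>e\<in>UNIV. \<Gamma> e k c * omega b e)
      + (\<Sum>d\<in>UNIV. g b d * nabla_J D \<Gamma> k d c)"
proof -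
  have Dg: "Dg b d k = 2 * Bk * g b d + (\<Sum>e\<in>UNIV. \<Gamma> e k b * g e d) + (\<Sum>e\<in>UNIV. \<Gamma> e k d * g b e)" for d
    using weyl[of b d] unfolding nabla_g_def by (simp add: algebra_simps g_sym)
  have mixed: "(\<Sum>d\<in>UNIV. \<Sum>e\<in>UNIV. g b d * (\<Gamma> d k e * J e c)) = (\<Sum>d\<in>UNIV. \<Sum>e\<in>UNIV. \<Gamma> e k d * g b e * J d c)"
    by (subst sum.swap) (simp add: mult_ac)
  have "(\<Sum>d\<in>UNIV. Dg b d k * J d c) = 2 * Bk * omega b c + (\<Sum>e\<in>UNIV. \<Gamma> e k b * omega e c)
      + (\<Sum>d\<in>UNIV. \<Sum>e\<in>UNIV. \<Gamma> e k d * g b e * J d c)"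
    unfolding Dg omega_def
    by (simp add: algebra_simps sum.distrib sum_distrib_left sum_distrib_right) (subst sum.swap, simp add: mult_ac)
  moreover have "(\<Sum>d\<in>UNIV. g b d * nabla_J D \<Gamma> k d c) = (\<Sum>d\<in>UNIV. g b d * D d c k)
      + (\<Sum>d\<in>UNIV. \<Sum>e\<in>UNIV. \<Gamma> e k d * g b e * J d c) - (\<Sum>e\<in>UNIV. \<Gamma> e k c * omega b e)"
    unfolding nabla_J_def omega_def mixed[symmetric]
    by (simp add: algebra_simps sum.distrib sum_subtractf sum_distrib_left) (subst sum.swap, simp add: mult_ac)
  ultimately show ?thesis by (simp add: sum.distrib)
qed

lemma skew_adjoint_nabla_J:
  assumes weyl: "\<And>k b c. nabla_g Dg \<Gamma> k b c = 2 * Bk k * g b c"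
    and omega_constant: "\<And>k b c.
      (\<Sum>d\<in>UNIV. Dg b d k * J d c + g b d * D d c k) + (\<Sum>d\<in>UNIV. Dg c d k * J d b + g c d * D d b k) = 0"
  shows "skew_adjoint (nabla_J D \<Gamma>)"
  unfolding skew_adjoint_def
proof (intro allI)
  fix k b c
  have skew_terms: "(\<Sum>e\<in>UNIV. \<Gamma> e k a * omega e d) + (\<Sum>e\<in>UNIV. \<Gamma> e k a * omega d e) = 0" for a d
    by (simp only: sum.distrib[symmetric] distrib_left[symmetric] omega_skew) simp
  have "omega c b = - omega b c"
    using omega_skew[of b c] by simp
  then show "(\<Sum>d\<in>UNIV. g b d * nabla_J D \<Gamma> k d c) + (\<Sum>d\<in>UNIV. g c d * nabla_J D \<Gamma> k d b) = 0"
    using omega_constant[of b k c] derivative_omega[where k=k and Bk="Bk k" and D=D, OF weyl, of b c]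
      derivative_omega[where k=k and Bk="Bk k" and D=D, OF weyl, of c b] skew_terms[of b c] skew_terms[of c b]
    by (simp add: algebra_simps)
qed

lemma weyl_koszul:
  assumes sym: "\<And>e a b. \<Gamma> e a b = \<Gamma> e b a"
    and weyl: "\<And>a b c. nabla_g Dg \<Gamma> a b c = 2 * B a * g b c"
  shows "\<Gamma> e b c = (1/2) * (\<Sum>d\<in>UNIV. gi e d * (Dg d c b + Dg d b c - Dg b c d)) + weyl_shift B e b c"
proof -
  define L where "L c a b = (\<Sum>d\<in>UNIV. \<Gamma> d a b * g d c)" for c a b
  have Lsym: "L x a b = L x b a" for x a b unfolding L_def using sym by simp
  have DgL: "Dg b c a = L c a b + L b a c + 2 * B a * g b c" for a b c
  proof -
    have "(\<Sum>d\<in>UNIV. \<Gamma> d a c * g b d) = L b a c" unfolding L_def by (simp add: g_sym)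
    then show ?thesis using weyl[of a b c] unfolding L_def nabla_g_def by (simp add: algebra_simps)
  qed
  have K: "Dg d c b + Dg d b c - Dg b c d = 2 * L d b c + 2 * B b * g d c + 2 * B c * g d b - 2 * B d * g b c" for d
    using DgL[of d c b] DgL[of d b c] DgL[of b c d] Lsym[of c b d] Lsym[of b c d] Lsym[of d c b]
    by (simp add: algebra_simps)
  have "(1/2) * (\<Sum>d\<in>UNIV. gi e d * (Dg d c b + Dg d b c - Dg b c d))
      = (\<Sum>d\<in>UNIV. gi e d * L d b c) + B b * (\<Sum>d\<in>UNIV. gi e d * g d c) + B c * (\<Sum>d\<in>UNIV. gi e d * g d b)
        - (\<Sum>d\<in>UNIV. gi e d * B d) * g b c"
    unfolding K by (simp add: algebra_simps sum.distrib sum_subtractf sum_distrib_left sum_distrib_right)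
  also have "(\<Sum>d\<in>UNIV. gi e d * L d b c) = \<Gamma> e b c"
    unfolding L_def using ginv_g_contract'[of e "\<lambda>f. \<Gamma> f b c"] by (simp add: mult_ac g_sym)
  finally have "(1/2) * (\<Sum>d\<in>UNIV. gi e d * (Dg d c b + Dg d b c - Dg b c d)) =
      \<Gamma> e b c + B b * (\<Sum>d\<in>UNIV. gi e d * g d c) + B c * (\<Sum>d\<in>UNIV. gi e d * g d b)
        - (\<Sum>d\<in>UNIV. gi e d * B d) * g b c" .
  then show ?thesis unfolding ginv_g weyl_shift_def by linarith
qed

lemma trace_weyl_shift: "(\<Sum>a\<in>UNIV. weyl_shift B a a d) = - real CARD('n) * B d"
  unfolding weyl_shift_def by (simp add: sum.distrib sum_subtractf g_ginv_contract sum_negf)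

lemma raise_lower_comp_J: "(\<Sum>a\<in>UNIV. \<Sum>d\<in>UNIV. (\<Sum>e\<in>UNIV. gi d e * X e) * g a c * J a d) = - (\<Sum>a\<in>UNIV. X a * J a c)"
proof -
  let ?Y = "\<lambda>d. \<Sum>e\<in>UNIV. gi d e * X e"
  have "(\<Sum>a\<in>UNIV. \<Sum>d\<in>UNIV. ?Y d * g a c * J a d) = (\<Sum>d\<in>UNIV. ?Y d * (\<Sum>a\<in>UNIV. g c a * J a d))"
    unfolding sum_distrib_left by (subst sum.swap) (simp add: mult_ac g_sym)
  also have "\<dots> = (\<Sum>d\<in>UNIV. ?Y d * - (\<Sum>a\<in>UNIV. g d a * J a c))"
    by (rule sum.cong[OF refl], subst gJ_skew, rule refl)
  also have "\<dots> = - (\<Sum>a\<in>UNIV. (\<Sum>d\<in>UNIV. ?Y d * g d a) * J a c)"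
    unfolding sum_distrib_left sum_distrib_right sum_negf mult_minus_right
    by (subst sum.swap) (simp add: mult_ac)
  also have "\<dots> = - (\<Sum>a\<in>UNIV. X a * J a c)"
    by (simp only: g_ginv_contract)
  finally show ?thesis .
qed

lemma weyl_shift_comp_J_trace:
  "(\<Sum>a\<in>UNIV. \<Sum>d\<in>UNIV. weyl_shift B d a c * J a d) = - 2 * (\<Sum>a\<in>UNIV. B a * J a c)"
proof -
  have "(\<Sum>a\<in>UNIV. \<Sum>d\<in>UNIV. weyl_shift B d a c * J a d) =
      - (\<Sum>a\<in>UNIV. \<Sum>d\<in>UNIV. B a * (if d = c then 1 else 0) * J a d)
      - (\<Sum>a\<in>UNIV. \<Sum>d\<in>UNIV. B c * (if d = a then 1 else 0) * J a d)
      + (\<Sum>a\<in>UNIV. \<Sum>d\<in>UNIV. (\<Sum>e\<in>UNIV. gi d e * B e) * g a c * J a d)"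
    unfolding weyl_shift_def by (simp only: sum.distrib sum_subtractf sum_negf mult_minus_left ring_distribs)
  also have "(\<Sum>a\<in>UNIV. \<Sum>d\<in>UNIV. B a * (if d = c then 1 else 0) * J a d) = (\<Sum>a\<in>UNIV. B a * J a c)"
    by (simp add: if_distrib[of "\<lambda>t. _ * t * _"] cong: if_cong)
  also have "(\<Sum>a\<in>UNIV. \<Sum>d\<in>UNIV. B c * (if d = a then 1 else 0) * J a d) = B c * (\<Sum>a\<in>UNIV. J a a)"
    by (simp add: if_distrib[of "\<lambda>t. _ * t * _"] sum_distrib_left cong: if_cong)
  finally show ?thesis by (simp add: trace_J_zero raise_lower_comp_J)
qed

lemma divergence_nabla_J_weyl_shift:
  assumes "\<And>e b c. \<Gamma>' e b c = \<Gamma> e b c + weyl_shift B e b c"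
  shows "divergence (nabla_J D \<Gamma>') c = divergence (nabla_J D \<Gamma>) c - (real CARD('n) - 2) * (\<Sum>d\<in>UNIV. B d * J d c)"
proof -
  have "divergence (nabla_J D \<Gamma>') c = divergence (nabla_J D \<Gamma>) c
      + (\<Sum>a\<in>UNIV. \<Sum>d\<in>UNIV. weyl_shift B a a d * J d c) - (\<Sum>a\<in>UNIV. \<Sum>d\<in>UNIV. weyl_shift B d a c * J a d)"
    unfolding divergence_def nabla_J_def assms by (simp add: algebra_simps sum.distrib sum_subtractf)
  also have "(\<Sum>a\<in>UNIV. \<Sum>d\<in>UNIV. weyl_shift B a a d * J d c) = (\<Sum>d\<in>UNIV. (\<Sum>a\<in>UNIV. weyl_shift B a a d) * J d c)"
    unfolding sum_distrib_right by (rule sum.swap)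
  also have "\<dots> = - real CARD('n) * (\<Sum>d\<in>UNIV. B d * J d c)"
    by (simp only: trace_weyl_shift) (simp add: sum_distrib_left mult_ac)
  finally show ?thesis using weyl_shift_comp_J_trace[of B c] by (simp add: algebra_simps)
qed

lemma weyl_form_eq_from_divergence:
  assumes "anticommutes_J T" "CARD('n) \<noteq> 2"
    and "\<And>c. divergence T c = (real CARD('n) - 2) * (\<Sum>d\<in>UNIV. B d * J d c)"
  shows "(1 / (real CARD('n) - 2)) * (\<Sum>c\<in>UNIV. \<Sum>b\<in>UNIV. J c b * T c b a) = B a"
proof -
  have "(\<Sum>c\<in>UNIV. \<Sum>b\<in>UNIV. J c b * T c b a) = - (\<Sum>e\<in>UNIV. divergence T e * J e a)"
    using contract_J_eq_divergence[OF assms(1), of a] .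
  also have "\<dots> = - ((real CARD('n) - 2) * (\<Sum>e\<in>UNIV. (\<Sum>d\<in>UNIV. B d * J d e) * J e a))"
    by (simp only: assms(3) mult.assoc sum_distrib_left[symmetric])
  also have "\<dots> = (real CARD('n) - 2) * B a"
    by (simp add: contract_J_J)
  finally show ?thesis using assms(2) by simp
qed

end

lemma pd_sum_prod:
  fixes f h :: "'i \<Rightarrow> real^'n \<Rightarrow> real"
  assumes "finite I" "\<And>e. e \<in> I \<Longrightarrow> f e differentiable at x" "\<And>e. e \<in> I \<Longrightarrow> h e differentiable at x"
  shows "pd (\<lambda>y. \<Sum>e\<in>I. f e y * h e y) x k = (\<Sum>e\<in>I. f e x * pd (h e) x k + pd (f e) x k * h e x)"
proof -
  have "((\<lambda>y. \<Sum>e\<in>I. f e y * h e y) has_derivative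
     (\<lambda>v. \<Sum>e\<in>I. f e x * frechet_derivative (h e) (at x) v + frechet_derivative (f e) (at x) v * h e x)) (at x)"
    by (intro has_derivative_sum has_derivative_mult frechet_derivative_works[THEN iffD1] assms)
  from frechet_derivative_at[OF this, symmetric] show ?thesis unfolding pd_def by simp
qed

lemma pd_add:
  fixes f h :: "real^'n \<Rightarrow> real"
  assumes "f differentiable at x" "h differentiable at x"
  shows "pd (\<lambda>y. f y + h y) x k = pd f x k + pd h x k"
proof -
  have "((\<lambda>y. f y + h y) has_derivative
     (\<lambda>v. frechet_derivative f (at x) v + frechet_derivative h (at x) v)) (at x)"
    by (intro has_derivative_add frechet_derivative_works[THEN iffD1] assms)
  from frechet_derivative_at[OF this, symmetric] show ?thesis unfolding pd_def by simp
qed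

lemma pd_locally_const:
  fixes f :: "real^'n \<Rightarrow> real"
  assumes "open U" "x \<in> U" "\<And>y. y \<in> U \<Longrightarrow> f y = c"
  shows "pd f x k = 0"
proof -
  have "frechet_derivative (\<lambda>y. c) (at x) = frechet_derivative f (at x)"
    by (rule frechet_derivative_transform_within_open[OF differentiable_const assms(1,2)]) (use assms(3) in auto)
  moreover have "frechet_derivative (\<lambda>y. c) (at x) = (\<lambda>v. 0)"
    using frechet_derivative_at[OF has_derivative_const[of c "at x"]] by simp
  ultimately show ?thesis unfolding pd_def by (metis (no_types))
qed

lemma pd_transform_within_open:
  fixes f h :: "real^'n \<Rightarrow> real"
  assumes "f differentiable at x" "open U" "x \<in> U" "\<And>y. y \<in> U \<Longrightarrow> f y = h y"
  shows "pd f x k = pd h x k"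
  unfolding pd_def using frechet_derivative_transform_within_open[OF assms] by simp

lemma g_J_skew_if_orthogonal:
  fixes g J :: "'n::finite \<Rightarrow> 'n \<Rightarrow> real"
  assumes g_sym: "\<And>a b. g a b = g b a"
    and J_square: "\<And>a c. (\<Sum>b\<in>UNIV. J a b * J b c) = (if a = c then -1 else 0)"
    and orth: "\<And>c d. (\<Sum>a\<in>UNIV. \<Sum>b\<in>UNIV. g a b * J a c * J b d) = g c d"
  shows "(\<Sum>d\<in>UNIV. g b d * J d c) = - (\<Sum>d\<in>UNIV. g c d * J d b)"
proof -
  have "(\<Sum>d\<in>UNIV. g c d * J d b) = (\<Sum>d\<in>UNIV. (\<Sum>a\<in>UNIV. \<Sum>e\<in>UNIV. g a e * J a c * J e d) * J d b)"
    by (simp only: orth)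
  also have "\<dots> = (\<Sum>a\<in>UNIV. \<Sum>e\<in>UNIV. g a e * J a c * (\<Sum>d\<in>UNIV. J e d * J d b))"
    unfolding sum_distrib_left sum_distrib_right
    by (subst (2) sum.swap, subst sum.swap) (simp add: mult_ac)
  also have "\<dots> = - (\<Sum>a\<in>UNIV. g a b * J a c)" by (simp only: J_square) (simp add: sum_negf)
  finally show ?thesis by (simp add: g_sym)
qed

lemma metric_mat_invertible:
  fixes g :: "real^'n \<Rightarrow> 'n \<Rightarrow> 'n \<Rightarrow> real"
  assumes pos: "\<forall>v::real^'n. v \<noteq> 0 \<longrightarrow> (\<Sum>a\<in>UNIV. \<Sum>b\<in>UNIV. g x a b * v$a * v$b) > 0"
  shows "invertible (metric_mat g x)"
proof -
  have "\<forall>v. metric_mat g x *v v = 0 \<longrightarrow> v = 0"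
  proof (intro allI impI)
    fix v assume h: "metric_mat g x *v v = 0"
    have "(\<Sum>a\<in>UNIV. \<Sum>b\<in>UNIV. g x a b * v$a * v$b) = (\<Sum>a\<in>UNIV. v$a * (metric_mat g x *v v)$a)"
      by (simp add: matrix_vector_mult_def metric_mat_def sum_distrib_left mult_ac)
    also have "\<dots> = 0" using h by simp
    finally show "v = 0" using pos by force
  qed
  then show ?thesis
    using matrix_left_invertible_ker invertible_left_inverse by blast
qed

lemma ginv_inverse:
  fixes g :: "real^'n \<Rightarrow> 'n \<Rightarrow> 'n \<Rightarrow> real"
  assumes pos: "\<forall>v::real^'n. v \<noteq> 0 \<longrightarrow> (\<Sum>a\<in>UNIV. \<Sum>b\<in>UNIV. g x a b * v$a * v$b) > 0"
  shows "(\<Sum>d\<in>UNIV. ginv g x a d * g x d c) = (if a = c then 1 else 0)"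
    and "(\<Sum>d\<in>UNIV. g x a d * ginv g x d c) = (if a = c then 1 else 0)"
proof -
  let ?M = "metric_mat g x"
  have "?M ** matrix_inv ?M = mat 1 \<and> matrix_inv ?M ** ?M = mat 1"
    using metric_mat_invertible[of g x, OF pos] unfolding invertible_def matrix_inv_def by (rule someI_ex)
  then have "(matrix_inv ?M ** ?M) $ a $ c = (if a = c then 1 else 0)"
    and "(?M ** matrix_inv ?M) $ a $ c = (if a = c then 1 else 0)"
    by (simp_all add: mat_def)
  then show "(\<Sum>d\<in>UNIV. ginv g x a d * g x d c) = (if a = c then 1 else 0)"
    and "(\<Sum>d\<in>UNIV. g x a d * ginv g x d c) = (if a = c then 1 else 0)"
    by (simp_all add: matrix_matrix_mult_def ginv_def metric_mat_def)
qed

lemma ginv_sym: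
  fixes g :: "real^'n \<Rightarrow> 'n \<Rightarrow> 'n \<Rightarrow> real"
  assumes sym: "\<forall>a b. g x a b = g x b a"
    and pos: "\<forall>v::real^'n. v \<noteq> 0 \<longrightarrow> (\<Sum>a\<in>UNIV. \<Sum>b\<in>UNIV. g x a b * v$a * v$b) > 0"
  shows "ginv g x a c = ginv g x c a"
proof -
  have delta: "(\<Sum>d\<in>UNIV. ginv g x d a * g x d e) = (if e = a then 1 else 0)" for e
    unfolding ginv_inverse(2)[of g x e a, OF pos, symmetric] by (rule sum.cong[OF refl]) (metis sym mult.commute)
  have "ginv g x a c = (\<Sum>e\<in>UNIV. (\<Sum>d\<in>UNIV. ginv g x d a * g x d e) * ginv g x e c)"
    by (simp only: delta) simp
  also have "\<dots> = (\<Sum>d\<in>UNIV. ginv g x d a * (\<Sum>e\<in>UNIV. g x d e * ginv g x e c))"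
    unfolding sum_distrib_left sum_distrib_right by (subst sum.swap) (simp add: mult_ac)
  also have "\<dots> = ginv g x c a" by (simp only: ginv_inverse(2)[of g x, OF pos]) simp
  finally show ?thesis .
qed

lemma hermitian_algebra_at:
  fixes g J :: "real^'n \<Rightarrow> 'n \<Rightarrow> 'n \<Rightarrow> real"
  assumes "conformal_almost_hermitian U g J" "x \<in> U"
  shows "hermitian_algebra (g x) (ginv g x) (J x)"
proof -
  have sym: "\<forall>a b. g x a b = g x b a"
    and pos: "\<forall>v::real^'n. v \<noteq> 0 \<longrightarrow> (\<Sum>a\<in>UNIV. \<Sum>b\<in>UNIV. g x a b * v$a * v$b) > 0"
    and J_square: "\<And>a c. (\<Sum>b\<in>UNIV. J x a b * J x b c) = (if a = c then -1 else 0)"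
    and orth: "\<And>c d. (\<Sum>a\<in>UNIV. \<Sum>b\<in>UNIV. g x a b * J x a c * J x b d) = g x c d"
    using assms unfolding conformal_almost_hermitian_def by auto
  note inverse = ginv_inverse[of g x, OF pos]
  show ?thesis
  proof
    show "g x a b = g x b a" for a b using sym by blast
    show "ginv g x a b = ginv g x b a" for a b by (rule ginv_sym[of g x, OF sym pos])
    show "(\<Sum>d\<in>UNIV. ginv g x a d * g x d c) = (if a = c then 1 else 0)" for a c by (rule inverse(1))
    show "(\<Sum>d\<in>UNIV. g x a d * ginv g x d c) = (if a = c then 1 else 0)" for a c by (rule inverse(2))
    show "(\<Sum>b\<in>UNIV. J x a b * J x b c) = (if a = c then -1 else 0)" for a c by (rule J_square)
    show "(\<Sum>d\<in>UNIV. g x b d * J x d c) = - (\<Sum>d\<in>UNIV. g x c d * J x d b)" for b c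
      using g_J_skew_if_orthogonal[of "g x" "J x", OF _ J_square orth] sym by blast
  qed
qed

lemma cov_J_eq_nabla_J:
  assumes "conformal_almost_hermitian U g J" "x \<in> U"
  shows "cov_J \<Gamma> J x = hermitian_algebra.nabla_J (J x) (\<lambda>b c k. pd (\<lambda>y. J y b c) x k) (\<Gamma> x)"
  by (intro ext) (simp add: cov_J_def hermitian_algebra.nabla_J_def[OF hermitian_algebra_at[OF assms]])

lemma cov_g_eq_nabla_g:
  assumes "conformal_almost_hermitian U g J" "x \<in> U"
  shows "cov_g \<Gamma> g x a b c = hermitian_algebra.nabla_g (g x) (\<lambda>b c k. pd (\<lambda>y. g y b c) x k) (\<Gamma> x) a b c"
  by (simp add: cov_g_def hermitian_algebra.nabla_g_def[OF hermitian_algebra_at[OF assms]])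

lemma anticommutes_J_cov_J:
  assumes cah: "conformal_almost_hermitian U g J" and x: "x \<in> U"
  shows "hermitian_algebra.anticommutes_J (J x) (cov_J \<Gamma> J x)"
proof -
  interpret hermitian_algebra "g x" "ginv g x" "J x" using hermitian_algebra_at[OF assms] .
  have "open U" and J_square: "\<And>y a c. y \<in> U \<Longrightarrow> (\<Sum>b\<in>UNIV. J y a b * J y b c) = (if a = c then -1 else 0)"
    and dJ: "\<And>a b. (\<lambda>y. J y a b) differentiable (at x)"
    using cah x unfolding conformal_almost_hermitian_def by auto
  have "(\<Sum>e\<in>UNIV. J x b e * pd (\<lambda>y. J y e c) x k + pd (\<lambda>y. J y b e) x k * J x e c)
      = pd (\<lambda>y. \<Sum>e\<in>UNIV. J y b e * J y e c) x k" for k b c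
    by (rule pd_sum_prod[symmetric]) (auto intro: dJ)
  also have "\<dots> k b c = 0" for k b c
    by (rule pd_locally_const[OF \<open>open U\<close> x]) (use J_square in auto)
  finally show ?thesis
    unfolding cov_J_eq_nabla_J[OF cah x] by (rule anticommutes_J_nabla_J)
qed

lemma skew_adjoint_cov_J:
  assumes cah: "conformal_almost_hermitian U g J" and x: "x \<in> U"
    and weyl: "\<And>a b c. cov_g \<Gamma> g x a b c = 2 * B a * g x b c"
  shows "hermitian_algebra.skew_adjoint (g x) (cov_J \<Gamma> J x)"
proof -
  interpret hermitian_algebra "g x" "ginv g x" "J x" using hermitian_algebra_at[OF cah x] .
  have "open U" and dg: "\<And>a b. (\<lambda>y. g y a b) differentiable (at x)"
    and dJ: "\<And>a b. (\<lambda>y. J y a b) differentiable (at x)"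
    using cah x unfolding conformal_almost_hermitian_def by auto
  have skew: "(\<Sum>d\<in>UNIV. g y b d * J y d c) + (\<Sum>d\<in>UNIV. g y c d * J y d b) = 0" if "y \<in> U" for y b c
    using hermitian_algebra.gJ_skew[OF hermitian_algebra_at[OF cah that], of b c] by simp
  let ?dg = "\<lambda>b c k. pd (\<lambda>y. g y b c) x k" and ?dJ = "\<lambda>b c k. pd (\<lambda>y. J y b c) x k"
  have omega_constant:
    "(\<Sum>d\<in>UNIV. ?dg b d k * J x d c + g x b d * ?dJ d c k) + (\<Sum>d\<in>UNIV. ?dg c d k * J x d b + g x c d * ?dJ d b k) = 0"
    for k b c
  proof -
    have leibniz: "pd (\<lambda>y. \<Sum>d\<in>UNIV. g y b d * J y d c) x k = (\<Sum>d\<in>UNIV. ?dg b d k * J x d c + g x b d * ?dJ d c k)"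
      for b c
      using pd_sum_prod[of UNIV "\<lambda>d y. g y b d" x "\<lambda>d y. J y d c" k] dg dJ by (simp add: add.commute)
    have "(\<Sum>d\<in>UNIV. ?dg b d k * J x d c + g x b d * ?dJ d c k) + (\<Sum>d\<in>UNIV. ?dg c d k * J x d b + g x c d * ?dJ d b k)
        = pd (\<lambda>y. \<Sum>d\<in>UNIV. g y b d * J y d c) x k + pd (\<lambda>y. \<Sum>d\<in>UNIV. g y c d * J y d b) x k"
      by (simp only: leibniz)
    also have "\<dots> = pd (\<lambda>y. (\<Sum>d\<in>UNIV. g y b d * J y d c) + (\<Sum>d\<in>UNIV. g y c d * J y d b)) x k"
      by (rule pd_add[symmetric]) (auto intro!: differentiable_sum differentiable_mult dg dJ)
    also have "\<dots> = 0"
      by (rule pd_locally_const[OF \<open>open U\<close> x]) (rule skew)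
    finally show ?thesis .
  qed
  have "hermitian_algebra.nabla_g (g x) ?dg (\<Gamma> x) k b c = 2 * B k * g x b c" for k b c
    using weyl[of k b c] unfolding cov_g_eq_nabla_g[OF cah x] .
  from skew_adjoint_nabla_J[OF this omega_constant] show ?thesis
    unfolding cov_J_eq_nabla_J[OF cah x] .
qed

lemma weyl_christoffel_eq:
  assumes cah: "conformal_almost_hermitian U g J" and x: "x \<in> U"
    and sym: "\<And>a b c. \<Gamma> x a b c = \<Gamma> x a c b"
    and weyl: "\<And>a b c. cov_g \<Gamma> g x a b c = 2 * B a * g x b c"
  shows "\<Gamma> x e b c = lc_christoffel g x e b c + hermitian_algebra.weyl_shift (g x) (ginv g x) B e b c"
proof -
  interpret hermitian_algebra "g x" "ginv g x" "J x" using hermitian_algebra_at[OF cah x] .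
  have "open U" and dg: "\<And>a b. (\<lambda>y. g y a b) differentiable (at x)"
    and g_sym_near: "\<And>y a b. y \<in> U \<Longrightarrow> g y a b = g y b a"
    using cah x unfolding conformal_almost_hermitian_def by auto
  have "pd (\<lambda>y. g y b c) x a = pd (\<lambda>y. g y c b) x a" for a b c
    by (rule pd_transform_within_open[OF dg \<open>open U\<close> x]) (use g_sym_near in auto)
  then show ?thesis
    using weyl_koszul[of "\<Gamma> x" "\<lambda>b c k. pd (\<lambda>y. g y b c) x k" B e b c] sym weyl
    unfolding lc_christoffel_def cov_g_eq_nabla_g[OF cah x] by auto
qed

lemma trace_free_iff_J_compatible_at:
  assumes cah: "conformal_almost_hermitian U g J" and x: "x \<in> U"
    and weyl: "\<And>a b c. cov_g \<Gamma> g x a b c = 2 * B a * g x b c"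
  shows "totally_trace_free g x (G_tensor \<Gamma> J x) \<longleftrightarrow> (\<forall>b. (\<Sum>a\<in>UNIV. cov_J \<Gamma> J x a a b) = 0)"
    and "totally_trace_free g x (JG_tensor \<Gamma> J x) \<longleftrightarrow> (\<forall>b. (\<Sum>a\<in>UNIV. cov_J \<Gamma> J x a a b) = 0)"
    and "totally_trace_free g x (GJ2_tensor \<Gamma> J x) \<longleftrightarrow> (\<forall>b. (\<Sum>a\<in>UNIV. cov_J \<Gamma> J x a a b) = 0)"
    and "totally_trace_free g x (GJJ_tensor \<Gamma> J x) \<longleftrightarrow> (\<forall>b. (\<Sum>a\<in>UNIV. cov_J \<Gamma> J x a a b) = 0)"
proof -
  interpret hermitian_algebra "g x" "ginv g x" "J x" using hermitian_algebra_at[OF cah x] .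
  let ?T = "cov_J \<Gamma> J x"
  note anti = anticommutes_J_cov_J[OF cah x] and skew = skew_adjoint_cov_J[OF cah x weyl]
  have trace_free: "totally_trace_free g x H \<longleftrightarrow> trace_free H" for H
    unfolding totally_trace_free_def trace_free_def ..
  have compatible: "(\<forall>b. (\<Sum>a\<in>UNIV. ?T a a b) = 0) \<longleftrightarrow> (\<forall>b. divergence ?T b = 0)"
    unfolding divergence_def ..
  have G: "G_tensor \<Gamma> J x = G_of ?T"
    by (intro ext) (simp add: G_tensor_def G_of_def)
  have "JG_tensor \<Gamma> J x = JG_of ?T" "GJ2_tensor \<Gamma> J x = GJ_of ?T" "GJJ_tensor \<Gamma> J x = GJJ_of ?T"
    by (intro ext; simp add: JG_tensor_def JG_of_def GJ2_tensor_def GJ_of_def GJJ_tensor_def GJJ_of_def G)+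
  with G show "totally_trace_free g x (G_tensor \<Gamma> J x) \<longleftrightarrow> (\<forall>b. (\<Sum>a\<in>UNIV. ?T a a b) = 0)"
    and "totally_trace_free g x (JG_tensor \<Gamma> J x) \<longleftrightarrow> (\<forall>b. (\<Sum>a\<in>UNIV. ?T a a b) = 0)"
    and "totally_trace_free g x (GJ2_tensor \<Gamma> J x) \<longleftrightarrow> (\<forall>b. (\<Sum>a\<in>UNIV. ?T a a b) = 0)"
    and "totally_trace_free g x (GJJ_tensor \<Gamma> J x) \<longleftrightarrow> (\<forall>b. (\<Sum>a\<in>UNIV. ?T a a b) = 0)"
    unfolding trace_free compatible
    using trace_free_G_of_iff[OF anti skew] trace_free_JG_of_iff[OF skew]
      trace_free_GJ_of_iff[OF anti skew] trace_free_GJJ_of_iff[OF anti skew] by simp_all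
qed

lemma canonical_weyl_connection_if_J_compatible_at:
  fixes g J :: "real^'n \<Rightarrow> 'n \<Rightarrow> 'n \<Rightarrow> real"
  assumes n: "CARD('n) \<noteq> 2"
    and cah: "conformal_almost_hermitian U g J" and x: "x \<in> U"
    and sym: "\<And>a b c. \<Gamma> x a b c = \<Gamma> x a c b"
    and weyl: "\<And>a b c. cov_g \<Gamma> g x a b c = 2 * B a * g x b c"
    and compatible: "\<And>b. (\<Sum>a\<in>UNIV. cov_J \<Gamma> J x a a b) = 0"
  shows "\<Gamma> x a b c = canon_christoffel g J x a b c"
proof -
  interpret hermitian_algebra "g x" "ginv g x" "J x" using hermitian_algebra_at[OF cah x] .
  let ?dJ = "\<lambda>b c k. pd (\<lambda>y. J y b c) x k"
  note koszul = weyl_christoffel_eq[OF cah x sym weyl]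
  have "divergence (nabla_J ?dJ (\<Gamma> x)) c
      = divergence (nabla_J ?dJ (lc_christoffel g x)) c - (real CARD('n) - 2) * (\<Sum>d\<in>UNIV. B d * J x d c)" for c
    by (rule divergence_nabla_J_weyl_shift) (rule koszul)
  then have "divergence (cov_J (lc_christoffel g) J x) c = (real CARD('n) - 2) * (\<Sum>d\<in>UNIV. B d * J x d c)" for c
    using compatible unfolding cov_J_eq_nabla_J[OF cah x] divergence_def by simp
  from weyl_form_eq_from_divergence[OF anticommutes_J_cov_J[OF cah x] n this]
  have "canon_B g J x = B"
    unfolding canon_B_def by (intro ext) simp
  then show ?thesis
    unfolding canon_christoffel_def koszul weyl_shift_def by simp
qed

theorem lemma4p7:
  fixes U :: "(real^'n) set"
    and g J :: "real^'n \<Rightarrow> 'n \<Rightarrow> 'n \<Rightarrow> real"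
    and Gam :: "real^'n \<Rightarrow> 'n \<Rightarrow> 'n \<Rightarrow> 'n \<Rightarrow> real"
  assumes "CARD('n) \<ge> 4"
    and "conformal_almost_hermitian U g J"
    and "weyl_connection U g Gam"
  shows "((\<forall>x\<in>U. \<forall>b. (\<Sum>a\<in>UNIV. cov_J Gam J x a a b) = 0) \<longleftrightarrow>
            (\<forall>x\<in>U. totally_trace_free g x (G_tensor Gam J x))) \<and>
         ((\<forall>x\<in>U. \<forall>b. (\<Sum>a\<in>UNIV. cov_J Gam J x a a b) = 0) \<longleftrightarrow>
            (\<forall>x\<in>U. totally_trace_free g x (JG_tensor Gam J x))) \<and>
         ((\<forall>x\<in>U. \<forall>b. (\<Sum>a\<in>UNIV. cov_J Gam J x a a b) = 0) \<longleftrightarrow>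
            (\<forall>x\<in>U. totally_trace_free g x (GJ2_tensor Gam J x))) \<and>
         ((\<forall>x\<in>U. \<forall>b. (\<Sum>a\<in>UNIV. cov_J Gam J x a a b) = 0) \<longleftrightarrow>
            (\<forall>x\<in>U. totally_trace_free g x (GJJ_tensor Gam J x))) \<and>
         ((\<forall>x\<in>U. \<forall>b. (\<Sum>a\<in>UNIV. cov_J Gam J x a a b) = 0) \<longrightarrow>
            (\<forall>x\<in>U. \<forall>a b c. Gam x a b c = canon_christoffel g J x a b c))"
proof -
  obtain B where sym: "\<forall>x\<in>U. \<forall>a b c. Gam x a b c = Gam x a c b"
    and weyl: "\<forall>x\<in>U. \<forall>a b c. cov_g Gam g x a b c = 2 * B x a * g x b c"
    using assms(3) unfolding weyl_connection_def by blast
  have "CARD('n) \<noteq> 2" using assms(1) by simp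
  note trace_free = trace_free_iff_J_compatible_at[OF assms(2) _ weyl[rule_format]]
    and canonical = canonical_weyl_connection_if_J_compatible_at[OF this assms(2) _ sym[rule_format] weyl[rule_format]]
  show ?thesis
    using trace_free canonical by blast
qed

end
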